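(* Let $b(z)=\prod_{j=1}^nb_{\alpha_j}(z)$ be a finite Blaschke product, $b_{\alpha_j}(z)=\frac{z-\alpha_j}{1-\bar\alpha_jz}$, $\alpha_j\in\mathbb{D}$, and let $\epsilon(b)=\min\{1-|\alpha_j|:1\le j\le n\}$. Then for $1\le\mathfrak p<2$ there is a constant $C$ depending only on $\mathfrak p$ and $n$ such that $\|b\|^2_{D_{\mathfrak p}}\le C\,\epsilon(b)^{1-\mathfrak p}$.
   Context: For $\alpha\in\mathbb{R}$, the one-variable Dirichlet-type space $D_\alpha$ consists of holomorphic $f(z)=\sum_{k\ge0}a_kz^k$ on $\mathbb{D}$ with $\|f\|^2_{D_\alpha}=\sum_{k\ge0}(k+1)^\alpha|a_k|^2<\infty$. *)

theory Defs
  imports "HOL-Analysis.Analysis"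
begin

definition blaschke_factor :: "complex \<Rightarrow> complex \<Rightarrow> complex" where
  "blaschke_factor a z = (z - a) / (1 - cnj a * z)"

definition blaschke_prod :: "nat \<Rightarrow> (nat \<Rightarrow> complex) \<Rightarrow> complex \<Rightarrow> complex" where
  "blaschke_prod n \<alpha> z = (\<Prod>j<n. blaschke_factor (\<alpha> j) z)"

definition blaschke_eps :: "nat \<Rightarrow> (nat \<Rightarrow> complex) \<Rightarrow> real" where
  "blaschke_eps n \<alpha> = Min ((\<lambda>j. 1 - norm (\<alpha> j)) ` {..<n})"

definition taylor_coeff :: "(complex \<Rightarrow> complex) \<Rightarrow> nat \<Rightarrow> complex" where
  "taylor_coeff f k = (deriv ^^ k) f 0 / of_nat (fact k)"

definition in_dirichlet :: "real \<Rightarrow> (complex \<Rightarrow> complex) \<Rightarrow> bool" where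
  "in_dirichlet \<alpha> f \<longleftrightarrow> summable (\<lambda>k. (real k + 1) powr \<alpha> * (norm (taylor_coeff f k))^2)"

definition dirichlet_norm_sq :: "real \<Rightarrow> (complex \<Rightarrow> complex) \<Rightarrow> real" where
  "dirichlet_norm_sq \<alpha> f = (\<Sum>k. (real k + 1) powr \<alpha> * (norm (taylor_coeff f k))^2)"

end

theory Submission
  imports Defs "HOL-Complex_Analysis.Complex_Analysis"
begin

text \<open>On the unit circle \<open>|b| = 1\<close>, so by Parseval \<open>\<Sum>|c\<^sub>k|\<^sup>2 = 1\<close> for the Taylor coefficients
  \<open>c\<^sub>k\<close> of \<open>b\<close>; moreover \<open>\<Sum> k |c\<^sub>k|\<^sup>2\<close> is the circle integral of \<open>conj b \<cdot> z b'\<close>, at most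
  \<open>\<integral>|b'|\<close>, and \<open>\<Sum> k\<^sup>2 |c\<^sub>k|\<^sup>2 = \<integral>|b'|\<^sup>2\<close>. On the circle \<open>|b'|\<close> is bounded by the sum of the
  Poisson kernels of the zeros, each of total mass 1 and of supremum at most \<open>2/\<epsilon>\<close>; hence
  the two moments are at most \<open>n\<close> and \<open>2n\<^sup>2/\<epsilon>\<close>. Finally, for \<open>1 \<le> p \<le> 2\<close> the weight
  \<open>(k+1)\<^sup>p\<close> is at most \<open>\<epsilon>^(1-p) (k+1) + \<epsilon>^(2-p) (k+1)\<^sup>2\<close>.\<close>

definition circle_point :: "real \<Rightarrow> complex" where
  "circle_point t = exp (2 * of_real pi * \<i> * of_real t)"

lemma norm_circle_point [simp]: "norm (circle_point t) = 1"
  unfolding circle_point_def by (simp add: norm_exp_eq_Re)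

lemma continuous_on_circle_point [continuous_intros]: "continuous_on A circle_point"
  unfolding circle_point_def by (intro continuous_intros)

lemma continuous_on_compose_circle_point [continuous_intros]:
  "continuous_on (sphere 0 1) f \<Longrightarrow> continuous_on A (\<lambda>t. f (circle_point t))"
  by (rule continuous_on_compose2[OF _ continuous_on_circle_point]) auto

lemma cnj_mult_self: "cnj w * w = complex_of_real (norm w ^ 2)"
  by (metis complex_norm_square mult.commute)

subsection \<open>Fourier coefficients of power series on the unit circle\<close>

lemma has_integral_exp_2pi_int:
  fixes d :: int
  shows "((\<lambda>t. exp (2 * of_real pi * \<i> * of_int d * of_real t)) has_integral
           (if d = 0 then 1 else 0)) {0..1::real}"
proof (cases "d = 0")
  case True
  then show ?thesis using has_integral_const_real[of "1::complex" 0 1] by simp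
next
  case False
  define c where "c = 2 * of_real pi * \<i> * (of_int d :: complex)"
  have c0: "c \<noteq> 0" using False by (simp add: c_def)
  have "((\<lambda>t. exp (c * of_real t)) has_integral (exp (c * of_real 1) / c - exp (c * of_real 0) / c))
          {0..1::real}"
  proof (rule fundamental_theorem_of_calculus)
    fix x :: real assume "x \<in> {0..1}"
    have "((\<lambda>t. exp (c * of_real t) / c) has_vector_derivative (exp (c * of_real x) * (c * 1)) / c) (at x)"
      by (auto intro!: derivative_eq_intros has_vector_derivative_real_field simp: field_simps)
    then show "((\<lambda>t. exp (c * of_real t) / c) has_vector_derivative exp (c * of_real x)) (at x within {0..1})"
      using c0 by (auto intro: has_vector_derivative_at_within)
  qed simp
  moreover have "exp c = 1"
    using exp_integer_2pi[of "of_int d"] unfolding c_def by (simp add: mult_ac)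
  ultimately show ?thesis using False by (simp add: c_def)
qed

lemma integral_circle_point_power_cnj_power:
  "integral {0..1} (\<lambda>t. circle_point t ^ k * cnj (circle_point t) ^ m) = (if k = m then 1 else 0)"
proof -
  have "circle_point t ^ k * cnj (circle_point t) ^ m
          = exp (2 * of_real pi * \<i> * of_int (int k - int m) * of_real t)" for t
  proof -
    have "circle_point t ^ k = exp (of_nat k * (2 * of_real pi * \<i> * of_real t))"
      unfolding circle_point_def by (simp add: exp_of_nat_mult)
    moreover have "cnj (circle_point t) ^ m = exp (of_nat m * (- (2 * of_real pi * \<i> * of_real t)))"
      unfolding circle_point_def exp_cnj by (simp only: exp_of_nat_mult) simp
    ultimately show ?thesis by (simp add: exp_add[symmetric] algebra_simps)
  qed
  then show ?thesis using has_integral_exp_2pi_int[of "int k - int m"] by (simp add: integral_unique)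
qed

lemma power_series_integral_circle:
  fixes a :: "nat \<Rightarrow> complex" and f :: "complex \<Rightarrow> complex" and H :: "real \<Rightarrow> complex"
  assumes R: "1 < R" and S: "\<And>z. norm z < R \<Longrightarrow> (\<lambda>k. a k * z ^ k) sums f z"
    and H: "continuous_on {0..1} H"
  shows "(\<lambda>k. a k * integral {0..1} (\<lambda>t. H t * circle_point t ^ k))
           sums integral {0..1} (\<lambda>t. H t * f (circle_point t))"
proof -
  define \<rho> where "\<rho> = (1 + R) / 2"
  have "1 < \<rho>" and "\<rho> < R"
    using R by (simp_all add: \<rho>_def)
  then have "norm (complex_of_real \<rho>) < R" and "norm (1 :: complex) < norm (complex_of_real \<rho>)"
    by simp_all
  from powser_insidea[OF sums_summable[OF S[OF this(1)]] this(2)]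
  have sa: "summable (\<lambda>k. norm (a k))" by simp
  obtain B where B: "\<forall>t \<in> {0..1}. norm (H t) \<le> B"
    using compact_imp_bounded[OF compact_continuous_image[OF H compact_Icc]]
    by (auto simp: bounded_iff)
  define g where "g k t = H t * (a k * circle_point t ^ k)" for k t
  have "norm (g k t) \<le> B * norm (a k)" if "t \<in> {0..1}" for k t
    unfolding g_def norm_mult norm_power norm_circle_point
    using B that by (simp add: mult_right_mono)
  then have u: "uniform_limit {0..1} (\<lambda>n t. \<Sum>i<n. g i t) (\<lambda>t. \<Sum>i. g i t) sequentially"
    by (rule Weierstrass_m_test) (use sa in \<open>auto intro: summable_mult\<close>)
  have c: "continuous_on {0..1} (\<lambda>t. \<Sum>i<n. g i t)" for n
    unfolding g_def by (intro continuous_intros H)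
  obtain I J where I: "\<And>n. ((\<lambda>t. \<Sum>i<n. g i t) has_integral I n) {0..1}"
    and J: "((\<lambda>t. \<Sum>i. g i t) has_integral J) {0..1}" and lim: "I \<longlonglongrightarrow> J"
    using uniform_limit_integral[OF u c] by auto
  have "(\<Sum>i. g i t) = H t * f (circle_point t)" for t
    using sums_mult[OF S[of "circle_point t"], of "H t"] R unfolding g_def by (simp add: sums_iff)
  with J have J_eq: "J = integral {0..1} (\<lambda>t. H t * f (circle_point t))"
    by (simp add: integral_unique)
  have I_eq: "I n = (\<Sum>k<n. a k * integral {0..1} (\<lambda>t. H t * circle_point t ^ k))" for n
  proof -
    have "(g k has_integral a k * integral {0..1} (\<lambda>t. H t * circle_point t ^ k)) {0..1}" for k
      unfolding g_def mult.left_commute[of "H _"]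
      by (intro has_integral_mult_right integrable_integral integrable_continuous_real
          continuous_intros H)
    then have "((\<lambda>t. \<Sum>i<n. g i t) has_integral
                 (\<Sum>k<n. a k * integral {0..1} (\<lambda>t. H t * circle_point t ^ k))) {0..1}"
      by (intro has_integral_sum) auto
    then show ?thesis using I[of n] has_integral_unique by blast
  qed
  show ?thesis using lim unfolding sums_def I_eq J_eq .
qed

lemma power_series_coeff_integral:
  fixes a :: "nat \<Rightarrow> complex" and f :: "complex \<Rightarrow> complex"
  assumes R: "1 < R" and S: "\<And>z. norm z < R \<Longrightarrow> (\<lambda>k. a k * z ^ k) sums f z"
  shows "integral {0..1} (\<lambda>t. f (circle_point t) * cnj (circle_point t) ^ m) = a m"
proof -
  have "(\<lambda>k. a k * integral {0..1} (\<lambda>t. cnj (circle_point t) ^ m * circle_point t ^ k))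
          sums integral {0..1} (\<lambda>t. cnj (circle_point t) ^ m * f (circle_point t))"
    by (rule power_series_integral_circle[OF R]) (auto intro: S intro!: continuous_intros)
  then have "(\<lambda>k. a k * (if k = m then 1 else 0))
               sums integral {0..1} (\<lambda>t. f (circle_point t) * cnj (circle_point t) ^ m)"
    using integral_circle_point_power_cnj_power by (simp add: mult_ac)
  moreover have "(\<lambda>k. a k * (if k = m then 1 else 0)) sums a m"
    using sums_single[of m a] by (simp add: if_distrib cong: if_cong)
  ultimately show ?thesis using sums_unique2 by blast
qed

lemma parseval_shifted:
  fixes a c :: "nat \<Rightarrow> complex" and f g :: "complex \<Rightarrow> complex"
  assumes R: "1 < R" and S: "\<And>z. norm z < R \<Longrightarrow> (\<lambda>k. a k * z ^ k) sums f z"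
    and T: "\<And>z. norm z < R \<Longrightarrow> (\<lambda>k. c k * z ^ k) sums g z"
    and g: "continuous_on (sphere 0 1) g"
  shows "(\<lambda>k. a k * cnj (c (k + s))) sums
           integral {0..1} (\<lambda>t. cnj (g (circle_point t)) * circle_point t ^ s * f (circle_point t))"
proof -
  have "integral {0..1} (\<lambda>t. cnj (g (circle_point t)) * circle_point t ^ s * circle_point t ^ k)
          = cnj (c (k + s))" for k
  proof -
    have "integral {0..1} (\<lambda>t. cnj (g (circle_point t)) * circle_point t ^ s * circle_point t ^ k)
            = cnj (integral {0..1} (\<lambda>t. g (circle_point t) * cnj (circle_point t) ^ (k + s)))"
      by (simp add: integral_cnj power_add mult_ac)
    then show ?thesis using power_series_coeff_integral[OF R T] by simp
  qed
  with power_series_integral_circle[OF R S, of "\<lambda>t. cnj (g (circle_point t)) * circle_point t ^ s"]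
  show ?thesis by (simp add: g continuous_intros)
qed

lemma parseval:
  fixes a :: "nat \<Rightarrow> complex" and f :: "complex \<Rightarrow> complex"
  assumes R: "1 < R" and S: "\<And>z. norm z < R \<Longrightarrow> (\<lambda>k. a k * z ^ k) sums f z"
    and f: "continuous_on (sphere 0 1) f"
  shows "(\<lambda>k. norm (a k) ^ 2) sums integral {0..1} (\<lambda>t. norm (f (circle_point t)) ^ 2)"
proof -
  let ?F = "\<lambda>t. norm (f (circle_point t)) ^ 2"
  have "(?F has_integral integral {0..1} ?F) {0..1}"
    by (intro integrable_integral integrable_continuous_real continuous_intros f)
  from integral_unique[OF has_integral_of_real[OF this]]
  have "integral {0..1} (\<lambda>t. cnj (f (circle_point t)) * circle_point t ^ 0 * f (circle_point t))
          = of_real (integral {0..1} ?F)"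
    by (simp only: power_0 mult_1_right cnj_mult_self)
  with parseval_shifted[OF R S S f, of 0]
  have "(\<lambda>k. a k * cnj (a k)) sums of_real (integral {0..1} ?F)"
    by simp
  then have "(\<lambda>k. complex_of_real (norm (a k) ^ 2)) sums of_real (integral {0..1} ?F)"
    by (simp only: complex_norm_square)
  then show ?thesis by (simp only: sums_of_real_iff)
qed

subsection \<open>Moments of Taylor coefficients\<close>

lemma taylor_coeff_deriv:
  "taylor_coeff (deriv f) k = of_nat (Suc k) * taylor_coeff f (Suc k)"
proof -
  have "(deriv ^^ Suc k) f = (deriv ^^ k) (deriv f)"
    by (simp only: funpow_Suc_right o_def)
  then show ?thesis
    unfolding taylor_coeff_def fact_Suc of_nat_mult by (simp del: of_nat_Suc)
qed

lemma taylor_coeff_sums: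
  assumes "f holomorphic_on ball 0 R" and "norm z < R"
  shows "(\<lambda>k. taylor_coeff f k * z ^ k) sums f z"
  using holomorphic_power_series[OF assms(1), of z] assms(2) by (simp add: taylor_coeff_def)

lemma continuous_on_unit_sphere_if_holomorphic:
  assumes "f holomorphic_on ball 0 R" and "1 < R"
  shows "continuous_on (sphere 0 1) f"
  by (rule continuous_on_subset[OF holomorphic_on_imp_continuous_on[OF assms(1)]])
     (use assms(2) in auto)

lemma taylor_coeff_norm_sq_sums:
  assumes hol: "f holomorphic_on ball 0 R" and R: "1 < R"
  shows "(\<lambda>k. norm (taylor_coeff f k) ^ 2) sums
           integral {0..1} (\<lambda>t. norm (f (circle_point t)) ^ 2)"
  by (rule parseval[OF R taylor_coeff_sums[OF hol] continuous_on_unit_sphere_if_holomorphic[OF hol R]])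

lemma taylor_coeff_second_moment_sums:
  assumes hol: "f holomorphic_on ball 0 R" and R: "1 < R"
  shows "(\<lambda>k. real k ^ 2 * norm (taylor_coeff f k) ^ 2) sums
           integral {0..1} (\<lambda>t. norm (deriv f (circle_point t)) ^ 2)"
proof -
  have "deriv f holomorphic_on ball 0 R"
    using hol by (rule holomorphic_deriv) simp
  from taylor_coeff_norm_sq_sums[OF this R]
  have "(\<lambda>k. real (Suc k) ^ 2 * norm (taylor_coeff f (Suc k)) ^ 2) sums
          integral {0..1} (\<lambda>t. norm (deriv f (circle_point t)) ^ 2)"
    by (simp add: taylor_coeff_deriv norm_mult power_mult_distrib del: of_nat_Suc)
  then show ?thesis
    using sums_Suc_iff[of "\<lambda>k. real k ^ 2 * norm (taylor_coeff f k) ^ 2"] by simp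
qed

lemma taylor_coeff_first_moment_le:
  assumes hol: "f holomorphic_on ball 0 R" and R: "1 < R"
  shows "summable (\<lambda>k. real k * norm (taylor_coeff f k) ^ 2)"
    and "(\<Sum>k. real k * norm (taylor_coeff f k) ^ 2)
           \<le> integral {0..1} (\<lambda>t. norm (f (circle_point t)) * norm (deriv f (circle_point t)))"
proof -
  have hol': "deriv f holomorphic_on ball 0 R"
    using hol by (rule holomorphic_deriv) simp
  define J where
    "J = integral {0..1} (\<lambda>t. cnj (f (circle_point t)) * circle_point t ^ 1 * deriv f (circle_point t))"
  have "(\<lambda>k. taylor_coeff (deriv f) k * cnj (taylor_coeff f (k + 1))) sums J"
    unfolding J_def using R taylor_coeff_sums[OF hol'] taylor_coeff_sums[OF hol]
      continuous_on_unit_sphere_if_holomorphic[OF hol R]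
    by (rule parseval_shifted)
  moreover have "taylor_coeff (deriv f) k * cnj (taylor_coeff f (k + 1))
                  = complex_of_real (real (Suc k) * norm (taylor_coeff f (Suc k)) ^ 2)" for k
    by (simp only: taylor_coeff_deriv of_real_mult cnj_mult_self[symmetric] of_real_of_nat_eq
        mult.assoc mult.commute[of "cnj _"] Suc_eq_plus1)
  ultimately have "(\<lambda>k. complex_of_real (real (Suc k) * norm (taylor_coeff f (Suc k)) ^ 2)) sums J"
    by simp
  from sums_Re[OF this]
  have sums: "(\<lambda>k. real k * norm (taylor_coeff f k) ^ 2) sums Re J"
    using sums_Suc_iff[of "\<lambda>k. real k * norm (taylor_coeff f k) ^ 2"] by simp
  then show "summable (\<lambda>k. real k * norm (taylor_coeff f k) ^ 2)"
    by (rule sums_summable)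
  have "Re J \<le> norm J" by (rule complex_Re_le_cmod)
  also have "norm J \<le> integral {0..1} (\<lambda>t. norm (f (circle_point t)) * norm (deriv f (circle_point t)))"
    unfolding J_def
    using continuous_on_unit_sphere_if_holomorphic[OF hol R]
      continuous_on_unit_sphere_if_holomorphic[OF hol' R]
    by (intro integral_norm_bound_integral integrable_continuous_real continuous_intros)
       (auto simp: norm_mult)
  finally show "(\<Sum>k. real k * norm (taylor_coeff f k) ^ 2) \<le> \<dots>"
    using sums by (simp add: sums_iff)
qed

subsection \<open>Interpolating the Dirichlet weight\<close>

lemma powr_le_interpolate:
  fixes e p x :: real
  assumes e: "0 < e" and p: "1 \<le> p" "p \<le> 2" and x: "0 < x"
  shows "x powr p \<le> e powr (1 - p) * x + e powr (2 - p) * x ^ 2"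
proof (cases "x * e \<le> 1")
  case True
  have "x powr p = x powr (p - 1) * x"
    using powr_add[of x "p - 1" 1] x by simp
  also have "x powr (p - 1) \<le> (1 / e) powr (p - 1)"
    using True p x e by (intro powr_mono2) (auto simp: field_simps)
  also have "(1 / e) powr (p - 1) = e powr (1 - p)"
    using e by (simp add: powr_divide powr_minus_divide[symmetric])
  finally have le: "x powr p \<le> e powr (1 - p) * x"
    using x by (simp add: mult_right_mono)
  show ?thesis
    using add_increasing2[OF _ le, of "e powr (2 - p) * x ^ 2"] by simp
next
  case False
  have "x powr p = x powr (p - 2) * x ^ 2"
    using powr_add[of x "p - 2" 2] x by (simp add: powr_numeral)
  also have "x powr (p - 2) \<le> (1 / e) powr (p - 2)"
    using False p x e by (intro powr_mono2') (auto simp: field_simps)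
  also have "(1 / e) powr (p - 2) = e powr (2 - p)"
    using e by (simp add: powr_divide powr_minus_divide[symmetric])
  finally have le: "x powr p \<le> e powr (2 - p) * x ^ 2"
    using x by (simp add: mult_right_mono)
  show ?thesis
    using add_increasing[OF _ le, of "e powr (1 - p) * x"] x by simp
qed

lemma powr_weighted_sum_le:
  fixes q :: "nat \<Rightarrow> real"
  assumes q: "\<And>k. 0 \<le> q k" and Q: "q sums 1"
    and M1: "(\<lambda>k. real k * q k) sums M1" and M1_le: "M1 \<le> A"
    and M2: "(\<lambda>k. real k ^ 2 * q k) sums M2" and M2_le: "e * M2 \<le> B"
    and e: "0 < e" "e \<le> 1" and p: "1 \<le> p" "p \<le> 2"
  shows "summable (\<lambda>k. (real k + 1) powr p * q k)"
    and "(\<Sum>k. (real k + 1) powr p * q k) \<le> (2 + 3 * A + B) * e powr (1 - p)"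
proof -
  define w where
    "w k = e powr (1 - p) * ((real k + 1) * q k) + e powr (2 - p) * ((real k + 1) ^ 2 * q k)" for k
  have "(\<lambda>k. (real k + 1) * q k) sums (1 + M1)"
    using sums_add[OF Q M1] by (simp add: algebra_simps)
  moreover have "(\<lambda>k. (real k + 1) ^ 2 * q k) sums (1 + 2 * M1 + M2)"
    using sums_add[OF sums_add[OF Q sums_mult[OF M1, of 2]] M2]
    by (simp add: power2_eq_square algebra_simps)
  ultimately have w: "w sums (e powr (1 - p) * (1 + M1) + e powr (2 - p) * (1 + 2 * M1 + M2))"
    unfolding w_def by (intro sums_add sums_mult)
  have le: "(real k + 1) powr p * q k \<le> w k" for k
    using mult_right_mono[OF powr_le_interpolate[OF e(1) p, of "real k + 1"] q[of k]]
    by (simp add: w_def algebra_simps)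
  show summable: "summable (\<lambda>k. (real k + 1) powr p * q k)"
    using le q by (intro summable_comparison_test'[OF sums_summable[OF w]]) auto
  have "0 \<le> M1"
    using q by (intro sums_le[OF _ sums_zero M1]) simp
  then have "e * (1 + 2 * M1) \<le> 1 + 2 * A"
    using mult_mono[of e 1 "1 + 2 * M1" "1 + 2 * A"] e M1_le by simp
  then have bound: "(1 + M1) + e * (1 + 2 * M1 + M2) \<le> 2 + 3 * A + B"
    using M1_le M2_le by (simp add: algebra_simps)
  have "(\<Sum>k. (real k + 1) powr p * q k) \<le> suminf w"
    using le summable sums_summable[OF w] by (rule suminf_le)
  also have "\<dots> = e powr (1 - p) * ((1 + M1) + e * (1 + 2 * M1 + M2))"
    using sums_unique[OF w] powr_add[of e "1 - p" 1] e by (simp add: algebra_simps)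
  also have "\<dots> \<le> e powr (1 - p) * (2 + 3 * A + B)"
    by (rule mult_left_mono[OF bound]) simp
  finally show "(\<Sum>k. (real k + 1) powr p * q k) \<le> (2 + 3 * A + B) * e powr (1 - p)"
    by (simp only: mult.commute)
qed

subsection \<open>Blaschke products on the unit circle\<close>

definition poisson_kernel :: "complex \<Rightarrow> complex \<Rightarrow> real" where
  "poisson_kernel a z = (1 - norm a ^ 2) / norm (1 - cnj a * z) ^ 2"

lemma poisson_kernel_le:
  assumes z: "norm z = 1" and a: "norm a < 1"
  shows "poisson_kernel a z \<le> 2 / (1 - norm a)"
proof -
  have "1 - norm a \<le> norm (1 - cnj a * z)"
    using norm_triangle_ineq2[of 1 "cnj a * z"] z by (simp add: norm_mult)
  then have "(1 - norm a) ^ 2 \<le> norm (1 - cnj a * z) ^ 2"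
    using a by (intro power_mono) auto
  moreover have "0 < 1 - norm a" using a by simp
  ultimately have "poisson_kernel a z \<le> (1 - norm a ^ 2) / (1 - norm a) ^ 2"
    unfolding poisson_kernel_def using a
    by (intro divide_left_mono mult_pos_pos) (auto simp: abs_square_le_1)
  also have "\<dots> = (1 + norm a) * (1 - norm a) / ((1 - norm a) * (1 - norm a))"
    by (simp add: power2_eq_square algebra_simps)
  also have "\<dots> = (1 + norm a) / (1 - norm a)"
    using a by simp
  also have "\<dots> \<le> 2 / (1 - norm a)"
    using a by (intro divide_right_mono) auto
  finally show ?thesis .
qed

lemma has_integral_poisson_kernel:
  assumes a: "norm a < 1"
  shows "((\<lambda>t. poisson_kernel a (circle_point t)) has_integral 1) {0..1}"
proof -
  define R where "R = 2 / (1 + norm a)"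
  have "0 < 1 + norm a" by (simp add: add_pos_nonneg)
  then have R: "1 < R" and aR: "norm a * R < 1"
    using a by (simp_all add: R_def less_divide_eq divide_less_eq)
  have small: "norm (cnj a * z) < 1" if "norm z < R" for z
    using mult_left_mono[of "norm z" R "norm a"] that aR by (simp add: norm_mult)
  \<comment> \<open>\<open>P\<^sub>a = (1 - |a|\<^sup>2) |h|\<^sup>2\<close> on the circle, and Parseval for the geometric series of \<open>h\<close>
    gives \<open>\<integral>|h|\<^sup>2 = \<Sum> |a|\<^sup>2\<^sup>k\<close>.\<close>
  define h where "h z = 1 / (1 - cnj a * z)" for z
  have S: "(\<lambda>k. cnj a ^ k * z ^ k) sums h z" if "norm z < R" for z
    using geometric_sums[OF small[OF that]] unfolding h_def by (simp add: power_mult_distrib)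
  have "1 - cnj a * z \<noteq> 0" if "z \<in> sphere 0 1" for z
    using small[of z] that R by auto
  then have h: "continuous_on (sphere 0 1) h"
    unfolding h_def by (intro continuous_intros) auto
  have "(\<lambda>k. (norm a ^ 2) ^ k) sums integral {0..1} (\<lambda>t. norm (h (circle_point t)) ^ 2)"
    using parseval[OF R S h] by (simp add: norm_power power_mult[symmetric] mult.commute)
  moreover have "(\<lambda>k. (norm a ^ 2) ^ k) sums (1 / (1 - norm a ^ 2))"
    using a by (intro geometric_sums) (simp add: abs_square_less_1)
  ultimately have "integral {0..1} (\<lambda>t. norm (h (circle_point t)) ^ 2) = 1 / (1 - norm a ^ 2)"
    using sums_unique2 by blast
  moreover have "((\<lambda>t. norm (h (circle_point t)) ^ 2) has_integral
                   integral {0..1} (\<lambda>t. norm (h (circle_point t)) ^ 2)) {0..1}"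
    by (intro integrable_integral integrable_continuous_real continuous_intros h)
  ultimately have "((\<lambda>t. norm (h (circle_point t)) ^ 2) has_integral 1 / (1 - norm a ^ 2)) {0..1}"
    by simp
  from has_integral_mult_right[OF this, of "1 - norm a ^ 2"]
  have "((\<lambda>t. (1 - norm a ^ 2) * norm (h (circle_point t)) ^ 2) has_integral 1) {0..1}"
    using a by (simp add: abs_square_less_1 abs_square_eq_1)
  then show ?thesis
    unfolding poisson_kernel_def h_def by (simp add: norm_divide power_divide)
qed

lemma norm_blaschke_factor_circle:
  assumes z: "norm z = 1" and a: "norm a < 1"
  shows "norm (blaschke_factor a z) = 1"
proof -
  have "z * cnj z = 1"
    using complex_norm_square[of z] z by simp
  then have "1 - cnj a * z = z * cnj (z - a)"
    by (simp add: algebra_simps)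
  then have "norm (1 - cnj a * z) = norm (z - a)"
    using z complex_mod_cnj[of "z - a"] by (simp add: norm_mult)
  moreover have "norm (cnj a * z) < 1"
    using z a by (simp add: norm_mult)
  then have "1 - cnj a * z \<noteq> 0" by auto
  ultimately show ?thesis
    unfolding blaschke_factor_def norm_divide by (metis divide_self norm_eq_zero)
qed

lemma norm_blaschke_prod_circle:
  assumes "norm z = 1" and "\<And>j. j < n \<Longrightarrow> norm (\<alpha> j) < 1"
  shows "norm (blaschke_prod n \<alpha> z) = 1"
  unfolding blaschke_prod_def prod_norm[symmetric]
  using assms by (simp add: norm_blaschke_factor_circle)

lemma blaschke_factor_has_field_derivative:
  assumes "1 - cnj a * z \<noteq> 0"
  shows "(blaschke_factor a has_field_derivative (1 - cnj a * a) / (1 - cnj a * z) ^ 2) (at z)"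
proof -
  have "((\<lambda>z. (z - a) / (1 - cnj a * z)) has_field_derivative
          (1 - cnj a * z + (z - a) * cnj a) / (1 - cnj a * z) ^ 2) (at z)"
    using assms by (auto intro!: derivative_eq_intros simp: power2_eq_square)
  moreover have "1 - cnj a * z + (z - a) * cnj a = 1 - cnj a * a"
    by (simp add: algebra_simps)
  ultimately show ?thesis unfolding blaschke_factor_def[abs_def] by simp
qed

lemma norm_blaschke_factor_derivative:
  assumes "norm a < 1"
  shows "norm ((1 - cnj a * a) / (1 - cnj a * z) ^ 2) = poisson_kernel a z"
proof -
  have eq: "1 - cnj a * a = of_real (1 - norm a ^ 2)"
    by (simp only: cnj_mult_self of_real_diff of_real_1)
  have "norm (1 - cnj a * a) = 1 - norm a ^ 2"
    unfolding eq norm_of_real using assms by (simp add: abs_square_le_1)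
  then show ?thesis
    unfolding poisson_kernel_def by (simp add: norm_divide norm_power)
qed

lemma holomorphic_on_blaschke_prod:
  assumes "\<And>j. j < n \<Longrightarrow> norm (\<alpha> j) * R < 1"
  shows "blaschke_prod n \<alpha> holomorphic_on ball 0 R"
proof -
  have "1 - cnj (\<alpha> j) * z \<noteq> 0" if "j < n" "norm z < R" for j z
  proof -
    have "norm (cnj (\<alpha> j) * z) \<le> norm (\<alpha> j) * R"
      using that(2) by (simp add: norm_mult mult_left_mono)
    then show ?thesis using assms[OF that(1)] by auto
  qed
  then show ?thesis
    unfolding blaschke_prod_def[abs_def] blaschke_factor_def
    by (intro holomorphic_intros) auto
qed

lemma blaschke_prod_holomorphic_beyond_circle:
  assumes "\<And>j. j < n \<Longrightarrow> norm (\<alpha> j) < 1"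
  obtains R where "1 < R" and "blaschke_prod n \<alpha> holomorphic_on ball 0 R"
proof -
  define M where "M = Max (insert 0 ((\<lambda>j. norm (\<alpha> j)) ` {..<n}))"
  have M: "0 \<le> M" "M < 1" and le_M: "\<And>j. j < n \<Longrightarrow> norm (\<alpha> j) \<le> M"
    using assms unfolding M_def by (auto simp: Max_ge_iff Max_less_iff)
  show ?thesis
  proof (rule that)
    show "1 < 2 / (1 + M)" using M by (simp add: field_simps)
    have "norm (\<alpha> j) * (2 / (1 + M)) < 1" if "j < n" for j
    proof -
      have "norm (\<alpha> j) * (2 / (1 + M)) \<le> M * (2 / (1 + M))"
        using le_M[OF that] M by (intro mult_right_mono) auto
      also have "\<dots> < 1" using M by (simp add: field_simps)
      finally show ?thesis .
    qed
    then show "blaschke_prod n \<alpha> holomorphic_on ball 0 (2 / (1 + M))"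
      by (rule holomorphic_on_blaschke_prod)
  qed
qed

lemma norm_deriv_blaschke_prod_le:
  assumes z: "norm z = 1" and \<alpha>: "\<And>j. j < n \<Longrightarrow> norm (\<alpha> j) < 1"
  shows "norm (deriv (blaschke_prod n \<alpha>) z) \<le> (\<Sum>j<n. poisson_kernel (\<alpha> j) z)"
proof -
  define D where "D j = (1 - cnj (\<alpha> j) * \<alpha> j) / (1 - cnj (\<alpha> j) * z) ^ 2" for j
  have "1 - cnj (\<alpha> j) * z \<noteq> 0" if "j < n" for j
  proof -
    have "norm (cnj (\<alpha> j) * z) < 1"
      using \<alpha>[OF that] z by (simp add: norm_mult)
    then show ?thesis by auto
  qed
  then have "(blaschke_prod n \<alpha> has_field_derivative
               (\<Sum>j<n. D j * (\<Prod>i\<in>{..<n} - {j}. blaschke_factor (\<alpha> i) z))) (at z)"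
    unfolding blaschke_prod_def[abs_def] D_def
    by (intro has_field_derivative_prod blaschke_factor_has_field_derivative) auto
  then have "norm (deriv (blaschke_prod n \<alpha>) z)
               = norm (\<Sum>j<n. D j * (\<Prod>i\<in>{..<n} - {j}. blaschke_factor (\<alpha> i) z))"
    by (simp add: DERIV_imp_deriv)
  also have "\<dots> \<le> (\<Sum>j<n. norm (D j * (\<Prod>i\<in>{..<n} - {j}. blaschke_factor (\<alpha> i) z)))"
    by (rule norm_sum)
  also have "\<dots> = (\<Sum>j<n. poisson_kernel (\<alpha> j) z)"
  proof (rule sum.cong)
    fix j assume j: "j \<in> {..<n}"
    have "norm (D j) = poisson_kernel (\<alpha> j) z"
      unfolding D_def using \<alpha> j by (intro norm_blaschke_factor_derivative) auto
    moreover have "(\<Prod>i\<in>{..<n} - {j}. norm (blaschke_factor (\<alpha> i) z)) = 1"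
      using z \<alpha> by (intro prod.neutral) (auto simp: norm_blaschke_factor_circle)
    ultimately show "norm (D j * (\<Prod>i\<in>{..<n} - {j}. blaschke_factor (\<alpha> i) z))
                       = poisson_kernel (\<alpha> j) z"
      by (simp add: norm_mult prod_norm[symmetric])
  qed simp
  finally show ?thesis .
qed

lemma has_integral_sum_poisson_kernel:
  assumes "\<And>j. j < n \<Longrightarrow> norm (\<alpha> j) < 1"
  shows "((\<lambda>t. \<Sum>j<n. poisson_kernel (\<alpha> j) (circle_point t)) has_integral real n) {0..1}"
  using has_integral_sum[of "{..<n}" "\<lambda>j t. poisson_kernel (\<alpha> j) (circle_point t)" "\<lambda>_. 1"]
    assms has_integral_poisson_kernel by simp

lemma integral_norm_deriv_blaschke_prod_le:
  assumes \<alpha>: "\<And>j. j < n \<Longrightarrow> norm (\<alpha> j) < 1"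
  shows "integral {0..1} (\<lambda>t. norm (deriv (blaschke_prod n \<alpha>) (circle_point t))) \<le> real n"
    and "0 < e \<Longrightarrow> (\<And>j. j < n \<Longrightarrow> e \<le> 1 - norm (\<alpha> j)) \<Longrightarrow>
           integral {0..1} (\<lambda>t. norm (deriv (blaschke_prod n \<alpha>) (circle_point t)) ^ 2)
             \<le> 2 * real n ^ 2 / e"
proof -
  obtain R where R: "1 < R" and hol: "blaschke_prod n \<alpha> holomorphic_on ball 0 R"
    using blaschke_prod_holomorphic_beyond_circle[OF \<alpha>] .
  have "deriv (blaschke_prod n \<alpha>) holomorphic_on ball 0 R"
    using hol by (rule holomorphic_deriv) simp
  note cont = continuous_on_unit_sphere_if_holomorphic[OF this R]
  define P where "P t = (\<Sum>j<n. poisson_kernel (\<alpha> j) (circle_point t))" for t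
  have P: "(P has_integral real n) {0..1}"
    unfolding P_def using \<alpha> by (rule has_integral_sum_poisson_kernel)
  have le_P: "norm (deriv (blaschke_prod n \<alpha>) (circle_point t)) \<le> P t" for t
    unfolding P_def using \<alpha> by (intro norm_deriv_blaschke_prod_le) auto
  have "(\<lambda>t. norm (deriv (blaschke_prod n \<alpha>) (circle_point t))) integrable_on {0..1}"
    by (intro integrable_continuous_real continuous_intros cont)
  from integral_le[OF this has_integral_integrable[OF P] le_P]
  show "integral {0..1} (\<lambda>t. norm (deriv (blaschke_prod n \<alpha>) (circle_point t))) \<le> real n"
    using integral_unique[OF P] by simp
  assume e: "0 < e" and e_le: "\<And>j. j < n \<Longrightarrow> e \<le> 1 - norm (\<alpha> j)"
  have P_le: "P t \<le> real n * (2 / e)" for t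
  proof -
    have "P t \<le> (\<Sum>j<n. 2 / e)"
      unfolding P_def using \<alpha> e e_le
      by (intro sum_mono order.trans[OF poisson_kernel_le] divide_left_mono) auto
    then show ?thesis by simp
  qed
  have "norm (deriv (blaschke_prod n \<alpha>) (circle_point t)) ^ 2 \<le> P t * (real n * (2 / e))" for t
    using mult_mono[OF le_P order.trans[OF le_P P_le] order.trans[OF norm_ge_zero le_P] norm_ge_zero]
    by (simp add: power2_eq_square)
  moreover have P_mult: "((\<lambda>t. P t * (real n * (2 / e))) has_integral real n * (real n * (2 / e))) {0..1}"
    by (rule has_integral_mult_left[OF P])
  ultimately have "integral {0..1} (\<lambda>t. norm (deriv (blaschke_prod n \<alpha>) (circle_point t)) ^ 2)
                     \<le> integral {0..1} (\<lambda>t. P t * (real n * (2 / e)))"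
    by (intro integral_le[OF _ has_integral_integrable[OF P_mult]])
       (intro integrable_continuous_real continuous_intros cont)
  also have "\<dots> = 2 * real n ^ 2 / e"
    using integral_unique[OF P_mult] by (simp add: power2_eq_square)
  finally show "integral {0..1} (\<lambda>t. norm (deriv (blaschke_prod n \<alpha>) (circle_point t)) ^ 2)
                  \<le> 2 * real n ^ 2 / e" .
qed

lemma blaschke_prod_taylor_coeff_moments:
  assumes \<alpha>: "\<And>j. j < n \<Longrightarrow> norm (\<alpha> j) < 1"
    and e: "0 < e" and e_le: "\<And>j. j < n \<Longrightarrow> e \<le> 1 - norm (\<alpha> j)"
  obtains M1 M2
  where "(\<lambda>k. norm (taylor_coeff (blaschke_prod n \<alpha>) k) ^ 2) sums 1"
    and "(\<lambda>k. real k * norm (taylor_coeff (blaschke_prod n \<alpha>) k) ^ 2) sums M1" and "M1 \<le> real n"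
    and "(\<lambda>k. real k ^ 2 * norm (taylor_coeff (blaschke_prod n \<alpha>) k) ^ 2) sums M2"
    and "e * M2 \<le> 2 * real n ^ 2"
proof -
  let ?b = "blaschke_prod n \<alpha>"
  obtain R where R: "1 < R" and hol: "?b holomorphic_on ball 0 R"
    using blaschke_prod_holomorphic_beyond_circle[OF \<alpha>] .
  have b_circle: "norm (?b (circle_point t)) = 1" for t
    using \<alpha> by (intro norm_blaschke_prod_circle) auto
  have "(\<Sum>k. real k * norm (taylor_coeff ?b k) ^ 2)
          \<le> integral {0..1} (\<lambda>t. norm (deriv ?b (circle_point t)))"
    using taylor_coeff_first_moment_le(2)[OF hol R] unfolding b_circle by simp
  also have "\<dots> \<le> real n"
    by (rule integral_norm_deriv_blaschke_prod_le(1)[OF \<alpha>])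
  finally have M1_le: "(\<Sum>k. real k * norm (taylor_coeff ?b k) ^ 2) \<le> real n" .
  have M2_le: "e * integral {0..1} (\<lambda>t. norm (deriv ?b (circle_point t)) ^ 2) \<le> 2 * real n ^ 2"
    using integral_norm_deriv_blaschke_prod_le(2)[OF \<alpha> e e_le] e by (simp add: field_simps)
  show ?thesis
  proof (rule that)
    show "(\<lambda>k. norm (taylor_coeff ?b k) ^ 2) sums 1"
      using taylor_coeff_norm_sq_sums[OF hol R] unfolding b_circle by simp
    show "(\<lambda>k. real k * norm (taylor_coeff ?b k) ^ 2) sums (\<Sum>k. real k * norm (taylor_coeff ?b k) ^ 2)"
      by (rule summable_sums[OF taylor_coeff_first_moment_le(1)[OF hol R]])
    show "(\<lambda>k. real k ^ 2 * norm (taylor_coeff ?b k) ^ 2) sums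
            integral {0..1} (\<lambda>t. norm (deriv ?b (circle_point t)) ^ 2)"
      by (rule taylor_coeff_second_moment_sums[OF hol R])
  qed (fact M1_le M2_le)+
qed

lemma blaschke_eps_le: "j < n \<Longrightarrow> blaschke_eps n \<alpha> \<le> 1 - norm (\<alpha> j)"
  unfolding blaschke_eps_def by (rule Min_le) auto

lemma blaschke_eps_pos:
  assumes "0 < n" and "\<And>j. j < n \<Longrightarrow> norm (\<alpha> j) < 1"
  shows "0 < blaschke_eps n \<alpha>"
  unfolding blaschke_eps_def using assms by (subst Min_gr_iff) auto

theorem lemma9p3:
  fixes p :: real and n :: nat
  assumes "1 \<le> p" and "p < 2" and "n \<ge> 1"
  shows "\<exists>C. \<forall>\<alpha> :: nat \<Rightarrow> complex. (\<forall>j<n. norm (\<alpha> j) < 1) \<longrightarrow>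
           in_dirichlet p (blaschke_prod n \<alpha>) \<and>
           dirichlet_norm_sq p (blaschke_prod n \<alpha>) \<le> C * blaschke_eps n \<alpha> powr (1 - p)"
proof (intro exI allI impI)
  fix \<alpha> :: "nat \<Rightarrow> complex"
  assume "\<forall>j<n. norm (\<alpha> j) < 1"
  then have \<alpha>: "\<And>j. j < n \<Longrightarrow> norm (\<alpha> j) < 1" by blast
  define e where "e = blaschke_eps n \<alpha>"
  have e: "0 < e"
    unfolding e_def using assms(3) \<alpha> by (intro blaschke_eps_pos) auto
  have e_le: "\<And>j. j < n \<Longrightarrow> e \<le> 1 - norm (\<alpha> j)"
    unfolding e_def by (rule blaschke_eps_le)
  have "e \<le> 1 - norm (\<alpha> 0)"
    using e_le assms(3) by simp
  then have "e \<le> 1"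
    using norm_ge_zero[of "\<alpha> 0"] by linarith
  obtain M1 M2 where moments:
    "(\<lambda>k. norm (taylor_coeff (blaschke_prod n \<alpha>) k) ^ 2) sums 1"
    "(\<lambda>k. real k * norm (taylor_coeff (blaschke_prod n \<alpha>) k) ^ 2) sums M1" "M1 \<le> real n"
    "(\<lambda>k. real k ^ 2 * norm (taylor_coeff (blaschke_prod n \<alpha>) k) ^ 2) sums M2"
    "e * M2 \<le> 2 * real n ^ 2"
    using blaschke_prod_taylor_coeff_moments[OF \<alpha> e e_le] .
  from powr_weighted_sum_le[OF _ moments e \<open>e \<le> 1\<close> assms(1) less_imp_le[OF assms(2)]]
  show "in_dirichlet p (blaschke_prod n \<alpha>) \<and>
      dirichlet_norm_sq p (blaschke_prod n \<alpha>)
        \<le> (2 + 3 * real n + 2 * real n ^ 2) * blaschke_eps n \<alpha> powr (1 - p)"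
    unfolding in_dirichlet_def dirichlet_norm_sq_def e_def by simp
qed

end
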